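(* Fix $w$ in the single-component setting, and suppose $\sigma\le1$. Then $L(w)\ge0.25\,p(0)\int_0^\infty\exp\big((|s(0)|-1)\delta-\frac\rho2\delta^2\big)\,d\delta$.
   Context: Single-component setting: $y$ uniform on $\{\pm1\}$; $x=(x_1,x_2)$, $x_1\in\mathbb{R}^{d_1}$, $x_2\sim\mathcal{N}(0,\Sigma_2)$ with $\Sigma_2\succ0$ independent of $x_1$. $\ell_{exp}(t)=\exp(-|t|)$, $L(w)=\mathbb{E}[\ell_{exp}(w^\top x)]$. For fixed $w=(w_1,w_2)$: $\sigma=\sqrt{w_2^\top\Sigma_2w_2}$; $p$ is the density of $\mu=w_1^\top x_1$, assumed such that $\log p$ is differentiable, $\nu$-strongly concave and $\rho$-smooth (i.e. $-\rho\le(\log p)''\le-\nu$) for some $0<\nu\le\rho$; $s(\mu)=\frac{p'(\mu)}{p(\mu)}$. Then $L(w)=\mathbb{E}_\mu[g_\sigma(\mu)]$ with $g_\sigma(\mu)=\mathbb{E}_{Z\sim\mathcal{N}(0,1)}[\ell_{exp}(\mu+\sigma Z)]$. *)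

theory Defs
  imports "HOL-Probability.Probability"
begin

definition ell_exp :: "real \<Rightarrow> real" where
  "ell_exp t = exp (- \<bar>t\<bar>)"

definition g_sigma :: "real \<Rightarrow> real \<Rightarrow> real" where
  "g_sigma \<sigma> \<mu> = (\<integral>z. std_normal_density z * ell_exp (\<mu> + \<sigma> * z) \<partial>lborel)"

text \<open>L(w) = E_mu [g_sigma(mu)], where mu = w1' x1 has density p and
  sigma = sqrt(w2' Sigma2 w2).\<close>
definition loss_L :: "(real \<Rightarrow> real) \<Rightarrow> real \<Rightarrow> real" where
  "loss_L p \<sigma> = (\<integral>\<mu>. p \<mu> * g_sigma \<sigma> \<mu> \<partial>lborel)"

end

theory Submission
  imports Defs
begin

text \<open>For \<open>\<sigma> \<le> 1\<close> the Gaussian smoothing costs at most a factor \<open>e\<close>: since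
  \<open>e\<^sup>-\<^sup>|\<^sup>z\<^sup>| \<ge> e\<^sup>-\<^sup>1 (3 - z\<^sup>2)/2\<close> and the standard normal has second moment 1,
  \<open>g\<^sub>\<sigma>(\<mu>) \<ge> e\<^sup>-\<^sup>|\<^sup>\<mu>\<^sup>|\<^sup>-\<^sup>1\<close>, so \<open>L(w) \<ge> e\<^sup>-\<^sup>1 \<integral> p(\<mu>) e\<^sup>-\<^sup>|\<^sup>\<mu>\<^sup>| d\<mu>\<close>. Restricting this integral to the
  half-line in the direction of \<open>sign s(0)\<close> and bounding \<open>p\<close> from below by the
  \<open>\<rho>\<close>-smoothness of \<open>log p\<close> at 0 gives the claim, as \<open>e\<^sup>-\<^sup>1 \<ge> 1/4\<close>.\<close>

lemma exp_neg_abs_ge_quadratic: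
  fixes z :: real
  shows "exp (-1) * (3/2 - z\<^sup>2/2) \<le> exp (-\<bar>z\<bar>)"
proof -
  have "3/2 - z\<^sup>2/2 \<le> 1 + (1 - \<bar>z\<bar>)"
    using zero_le_power2[of "\<bar>z\<bar> - 1"] by (simp add: power2_eq_square algebra_simps)
  also have "\<dots> \<le> exp (1 - \<bar>z\<bar>)"
    by (rule exp_ge_add_one_self)
  finally show ?thesis
    by (simp add: exp_diff exp_minus field_simps)
qed

lemma ell_exp_shift_ge_quadratic:
  fixes \<mu> \<sigma> z :: real
  assumes "0 \<le> \<sigma>" "\<sigma> \<le> 1"
  shows "exp (-\<bar>\<mu>\<bar> - 1) * (3/2 - z\<^sup>2/2) \<le> ell_exp (\<mu> + \<sigma> * z)"
proof -
  have "\<bar>\<sigma> * z\<bar> \<le> \<bar>z\<bar>"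
    using assms by (simp add: abs_mult mult_left_le_one_le)
  then have "exp (-\<bar>\<mu>\<bar>) * exp (-\<bar>z\<bar>) \<le> ell_exp (\<mu> + \<sigma> * z)"
    unfolding ell_exp_def exp_add[symmetric] by simp
  moreover have "exp (-\<bar>\<mu>\<bar> - 1) * (3/2 - z\<^sup>2/2) \<le> exp (-\<bar>\<mu>\<bar>) * exp (-\<bar>z\<bar>)"
    using mult_left_mono[OF exp_neg_abs_ge_quadratic[of z], of "exp (-\<bar>\<mu>\<bar>)"]
    by (simp add: exp_diff exp_minus field_simps)
  ultimately show ?thesis
    by linarith
qed

lemma integrable_std_normal_ell_exp:
  "integrable lborel (\<lambda>z. std_normal_density z * ell_exp (\<mu> + \<sigma> * z))"
proof (rule Bochner_Integration.integrable_bound)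
  show "integrable lborel std_normal_density"
    using integrable_std_normal_moment[of 0] by simp
  show "(\<lambda>z. std_normal_density z * ell_exp (\<mu> + \<sigma> * z)) \<in> borel_measurable lborel"
    unfolding ell_exp_def by measurable
  show "AE z in lborel. norm (std_normal_density z * ell_exp (\<mu> + \<sigma> * z)) \<le> norm (std_normal_density z)"
    by (intro AE_I2) (auto simp: ell_exp_def abs_mult intro!: mult_left_le normal_density_nonneg)
qed

lemma borel_measurable_g_sigma [measurable]: "g_sigma \<sigma> \<in> borel_measurable borel"
  unfolding g_sigma_def[abs_def] ell_exp_def by measurable

lemma g_sigma_nonneg: "0 \<le> g_sigma \<sigma> \<mu>"
  unfolding g_sigma_def ell_exp_def by (intro integral_nonneg_AE AE_I2) simp

lemma g_sigma_le_one: "g_sigma \<sigma> \<mu> \<le> 1"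
proof -
  have "g_sigma \<sigma> \<mu> \<le> (\<integral>z. std_normal_density z \<partial>lborel)"
    unfolding g_sigma_def
    using integrable_std_normal_moment[of 0]
    by (intro integral_mono integrable_std_normal_ell_exp)
       (auto simp: ell_exp_def intro!: mult_left_le normal_density_nonneg)
  then show ?thesis
    using integral_std_normal_moment_even[of 0] by simp
qed

lemma g_sigma_ge_exp_abs:
  assumes "0 \<le> \<sigma>" "\<sigma> \<le> 1"
  shows "exp (-\<bar>\<mu>\<bar> - 1) \<le> g_sigma \<sigma> \<mu>"
proof -
  let ?c = "exp (-\<bar>\<mu>\<bar> - 1)"
  have i0: "integrable lborel std_normal_density"
    using integrable_std_normal_moment[of 0] by simp
  have i2: "integrable lborel (\<lambda>z. std_normal_density z * z\<^sup>2)"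
    using integrable_std_normal_moment[of 2] by simp
  have "?c = (\<integral>z. ?c * (3/2 * std_normal_density z - 1/2 * (std_normal_density z * z\<^sup>2)) \<partial>lborel)"
    using i0 i2 integral_std_normal_moment_even[of 0] integral_std_normal_moment_even[of 1]
    by (simp add: integral_diff)
  also have "\<dots> \<le> g_sigma \<sigma> \<mu>"
    unfolding g_sigma_def
  proof (intro integral_mono integrable_std_normal_ell_exp)
    show "integrable lborel (\<lambda>z. ?c * (3/2 * std_normal_density z - 1/2 * (std_normal_density z * z\<^sup>2)))"
      using i0 i2 by auto
    fix z :: real
    have "?c * (3/2 * std_normal_density z - 1/2 * (std_normal_density z * z\<^sup>2))
          = std_normal_density z * (?c * (3/2 - z\<^sup>2/2))"
      by (simp add: algebra_simps)
    also have "\<dots> \<le> std_normal_density z * ell_exp (\<mu> + \<sigma> * z)"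
      by (intro mult_left_mono ell_exp_shift_ge_quadratic assms normal_density_nonneg)
    finally show "?c * (3/2 * std_normal_density z - 1/2 * (std_normal_density z * z\<^sup>2))
                  \<le> std_normal_density z * ell_exp (\<mu> + \<sigma> * z)" .
  qed
  finally show ?thesis .
qed

lemma loss_L_ge_exp_abs_integral:
  assumes p_nonneg: "\<And>x. 0 \<le> p x" and p_int: "integrable lborel p"
    and "0 \<le> \<sigma>" "\<sigma> \<le> 1"
  shows "exp (-1) * (\<integral>\<mu>. p \<mu> * exp (-\<bar>\<mu>\<bar>) \<partial>lborel) \<le> loss_L p \<sigma>"
proof -
  have [measurable]: "p \<in> borel_measurable borel"
    using borel_measurable_integrable[OF p_int] by simp
  have "integrable lborel (\<lambda>\<mu>. p \<mu> * g_sigma \<sigma> \<mu>)"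
    using p_int
    by (rule Bochner_Integration.integrable_bound)
       (auto simp: abs_mult g_sigma_nonneg g_sigma_le_one intro!: mult_left_le)
  then have "(\<integral>\<mu>. exp (-1) * (p \<mu> * exp (-\<bar>\<mu>\<bar>)) \<partial>lborel) \<le> loss_L p \<sigma>"
    unfolding loss_L_def
  proof (rule integral_mono')
    fix \<mu> :: real
    show "0 \<le> p \<mu> * g_sigma \<sigma> \<mu>"
      by (simp add: p_nonneg g_sigma_nonneg)
    have "exp (-1) * (p \<mu> * exp (-\<bar>\<mu>\<bar>)) = p \<mu> * exp (-\<bar>\<mu>\<bar> - 1)"
      by (simp add: exp_diff exp_minus field_simps)
    also have "\<dots> \<le> p \<mu> * g_sigma \<sigma> \<mu>"
      by (intro mult_left_mono g_sigma_ge_exp_abs assms p_nonneg)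
    finally show "exp (-1) * (p \<mu> * exp (-\<bar>\<mu>\<bar>)) \<le> p \<mu> * g_sigma \<sigma> \<mu>" .
  qed
  then show ?thesis
    by simp
qed

lemma set_integral_reflect_le_integral:
  fixes f :: "real \<Rightarrow> real"
  assumes f_int: "integrable lborel f" and f_nonneg: "\<And>x. 0 \<le> f x" and "\<bar>\<epsilon>\<bar> = 1"
  shows "(LBINT x:A. f (\<epsilon> * x)) \<le> (\<integral>x. f x \<partial>lborel)"
proof -
  have "\<epsilon> \<noteq> 0"
    using \<open>\<bar>\<epsilon>\<bar> = 1\<close> by auto
  have "(LBINT x:A. f (\<epsilon> * x)) \<le> (\<integral>x. f (\<epsilon> * x) \<partial>lborel)"
    unfolding set_lebesgue_integral_def
    using lborel_integrable_real_affine[OF f_int \<open>\<epsilon> \<noteq> 0\<close>, of 0]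
    by (intro integral_mono') (auto simp: f_nonneg indicator_def)
  also have "\<dots> = (\<integral>x. f x \<partial>lborel)"
    using lborel_integral_real_affine[OF \<open>\<epsilon> \<noteq> 0\<close>, of f 0] \<open>\<bar>\<epsilon>\<bar> = 1\<close> by simp
  finally show ?thesis .
qed

lemma smooth_log_density_lower_bound:
  fixes p :: "real \<Rightarrow> real"
  assumes "0 < p x" "0 < p y"
    and "ln (p y) \<ge> ln (p x) + s * (y - x) - \<rho> / 2 * (y - x)\<^sup>2"
  shows "p x * exp (s * (y - x) - \<rho> / 2 * (y - x)\<^sup>2) \<le> p y"
proof -
  have "exp (ln (p x) + (s * (y - x) - \<rho> / 2 * (y - x)\<^sup>2)) \<le> exp (ln (p y))"
    using assms(3) by simp
  then show ?thesis
    using assms(1,2) by (simp add: exp_add)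
qed

lemma integral_exp_abs_ge_smooth_log_density:
  fixes p :: "real \<Rightarrow> real"
  assumes pos: "\<And>x. 0 < p x" and p_int: "integrable lborel p"
    and smooth_at_0: "\<And>y. ln (p y) \<ge> ln (p 0) + s * y - \<rho> / 2 * y\<^sup>2"
  shows "p 0 * (LBINT \<delta>:{0..}. exp ((\<bar>s\<bar> - 1) * \<delta> - \<rho> / 2 * \<delta>\<^sup>2))
           \<le> (\<integral>\<mu>. p \<mu> * exp (-\<bar>\<mu>\<bar>) \<partial>lborel)"
proof -
  define \<epsilon> :: real where "\<epsilon> = (if s \<ge> 0 then 1 else -1)"
  define h where "h \<delta> = exp ((\<bar>s\<bar> - 1) * \<delta> - \<rho> / 2 * \<delta>\<^sup>2)" for \<delta>
  define q where "q \<mu> = p \<mu> * exp (-\<bar>\<mu>\<bar>)" for \<mu>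
  have \<epsilon>: "\<bar>\<epsilon>\<bar> = 1" "\<epsilon> \<noteq> 0"
    by (simp_all add: \<epsilon>_def)
  have [measurable]: "p \<in> borel_measurable borel"
    using borel_measurable_integrable[OF p_int] by simp
  have q_int: "integrable lborel q"
    using p_int unfolding q_def
    by (rule Bochner_Integration.integrable_bound) (auto simp: abs_mult intro!: mult_left_le)
  have q_nonneg: "0 \<le> q \<mu>" for \<mu>
    using pos[of \<mu>] by (simp add: q_def)
  have h_le_q: "p 0 * h \<delta> \<le> q (\<epsilon> * \<delta>)" if "\<delta> \<in> {0..}" for \<delta>
  proof -
    have \<epsilon>\<delta>: "\<bar>\<epsilon> * \<delta>\<bar> = \<delta>" "(\<epsilon> * \<delta>)\<^sup>2 = \<delta>\<^sup>2" "s * (\<epsilon> * \<delta>) = \<bar>s\<bar> * \<delta>"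
      using that by (auto simp: \<epsilon>_def)
    have "p 0 * exp (s * (\<epsilon> * \<delta> - 0) - \<rho> / 2 * (\<epsilon> * \<delta> - 0)\<^sup>2) \<le> p (\<epsilon> * \<delta>)"
      by (rule smooth_log_density_lower_bound) (use pos smooth_at_0[of "\<epsilon> * \<delta>"] in simp_all)
    then have "p 0 * exp (\<bar>s\<bar> * \<delta> - \<rho> / 2 * \<delta>\<^sup>2) \<le> p (\<epsilon> * \<delta>)"
      by (simp only: diff_zero \<epsilon>\<delta>)
    moreover have "h \<delta> = exp (\<bar>s\<bar> * \<delta> - \<rho> / 2 * \<delta>\<^sup>2) * exp (-\<delta>)"
      unfolding h_def exp_add[symmetric] by (simp add: algebra_simps)
    ultimately show ?thesis
      using \<epsilon>\<delta>(1) by (simp add: q_def)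
  qed
  have "p 0 * (LBINT \<delta>:{0..}. h \<delta>) \<le> (LBINT \<delta>:{0..}. q (\<epsilon> * \<delta>))"
    unfolding set_integral_mult_right[symmetric] unfolding set_lebesgue_integral_def
    using integrable_mult_indicator[OF _ lborel_integrable_real_affine[OF q_int \<epsilon>(2), of 0], of "{0..}"]
    by (intro integral_mono') (auto simp: indicator_def h_le_q q_nonneg)
  also have "\<dots> \<le> (\<integral>\<mu>. q \<mu> \<partial>lborel)"
    using q_int q_nonneg \<epsilon>(1) by (rule set_integral_reflect_le_integral)
  finally show ?thesis
    by (simp add: h_def q_def)
qed

theorem claim3:
  fixes p p' :: "real \<Rightarrow> real" and \<sigma> \<nu> \<rho> :: real
  assumes pos: "\<And>x. p x > 0"
    and dens_int: "integrable lborel p"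
    and dens_one: "(\<integral>x. p x \<partial>lborel) = 1"
    and p_deriv: "\<And>x. (p has_real_derivative p' x) (at x)"
    and nu_pos: "0 < \<nu>" and nu_le_rho: "\<nu> \<le> \<rho>"
    and strongly_concave: "\<And>x y. ln (p y) \<le> ln (p x) + (p' x / p x) * (y - x) - \<nu> / 2 * (y - x)\<^sup>2"
    and smooth: "\<And>x y. ln (p y) \<ge> ln (p x) + (p' x / p x) * (y - x) - \<rho> / 2 * (y - x)\<^sup>2"
    and sigma_nonneg: "0 \<le> \<sigma>" and sigma_le: "\<sigma> \<le> 1"
  shows "loss_L p \<sigma> \<ge> 0.25 * p 0 *
           (LBINT \<delta>:{0..}. exp ((\<bar>p' 0 / p 0\<bar> - 1) * \<delta> - \<rho> / 2 * \<delta>\<^sup>2))"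
proof -
  let ?J = "LBINT \<delta>:{0..}. exp ((\<bar>p' 0 / p 0\<bar> - 1) * \<delta> - \<rho> / 2 * \<delta>\<^sup>2)"
  have J_nonneg: "0 \<le> p 0 * ?J"
    unfolding set_lebesgue_integral_def
    using pos[of 0] by (intro mult_nonneg_nonneg integral_nonneg_AE AE_I2) simp_all
  have "0.25 \<le> exp (-1::real)"
    using exp_le by (simp add: exp_minus field_simps)
  then have "0.25 * p 0 * ?J \<le> exp (-1) * (p 0 * ?J)"
    using mult_right_mono[OF _ J_nonneg] by (simp only: mult.assoc)
  also have "p 0 * ?J \<le> (\<integral>\<mu>. p \<mu> * exp (-\<bar>\<mu>\<bar>) \<partial>lborel)"
    using pos dens_int smooth[of 0] by (intro integral_exp_abs_ge_smooth_log_density) auto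
  also have "exp (-1) * \<dots> \<le> loss_L p \<sigma>"
    by (rule loss_L_ge_exp_abs_integral[OF less_imp_le[OF pos] dens_int sigma_nonneg sigma_le])
  finally show ?thesis
    by simp
qed

end
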